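(* Let $\mathcal{R}$ be a right amenable cell space with finite stabiliser $G_0$, let $(\mathcal{R},Q,N,\delta)$ be a semi-cellular automaton with $Q$ finite and $N$ finite, whose global transition function is $\Delta$, and let $\mathcal{F}=(F_i)_{i\in I}$ be a right Følner net in $\mathcal{R}$. Suppose $\delta$ is $\bullet$-invariant, $Q$ contains at least two elements, and $\Delta$ is not pre-injective. Then $\mathrm{h}_{\mathcal{F}}(\Delta(Q^M))<\log|Q|$.
   Context: A cell space $\mathcal{R}$ consists of a group $G$ acting transitively on the left on a nonempty set $M$ via $\triangleright$, a point $m_0\in M$ and a family $(g_{m_0,m})_{m\in M}$ in $G$ with $g_{m_0,m}\triangleright m_0=m$. $G_0$ is the stabiliser of $m_0$, $G/G_0$ the set of left cosets, with $G$ acting by $g\cdot hG_0=ghG_0$. The right semi-action $\triangleleft\colon M\times G/G_0\to M$ is $m\triangleleft gG_0=g_{m_0,m}g\triangleright m_0$. $\mathcal{R}$ is right amenable if there is a finitely additive probability measure $\mu$ on the power set of $M$ such that $\mu(\{a\triangleleft\mathfrak{g}:a\in A\})=\mu(A)$ whenever $\mathfrak{g}\in G/G_0$, $A\subseteq M$ and $m\mapsto m\triangleleft\mathfrak{g}$ is injective on $A$. A right Følner net in $\mathcal{R}$ is a net $(F_i)_{i\in I}$ (over a directed set) of nonempty finite subsets of $M$ with $\lim_{i}\frac{|F_i\setminus\{m: m\triangleleft\mathfrak{g}\in F_i\}|}{|F_i|}=0$ for every $\mathfrak{g}\in G/G_0$. A semi-cellular automaton is $(\mathcal{R},Q,N,\delta)$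 with $Q$ a set, $N\subseteq G/G_0$ with $G_0\cdot N\subseteq N$, $\delta\colon Q^N\to Q$; its global transition function is $\Delta(c)(m)=\delta(n\mapsto c(m\triangleleft n))$. $\delta$ is $\bullet$-invariant if $\delta(g_0\bullet\ell)=\delta(\ell)$ for all $g_0\in G_0$, $\ell\in Q^N$, where $(g_0\bullet\ell)(n)=\ell(g_0^{-1}\cdot n)$. For $A\subseteq M$, $\pi_A\colon Q^M\to Q^A$ is restriction; $\mathrm{h}_{\mathcal{F}}(X)=\limsup_{i\in I}\frac{\log|\pi_{F_i}(X)|}{|F_i|}$ for $X\subseteq Q^M$. $\Delta$ is pre-injective if for all $c,c'\in Q^M$ such that $\{m: c(m)\neq c'(m)\}$ is finite and $\Delta(c)=\Delta(c')$ we have $c=c'$. *)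

theory Defs
  imports "HOL-Analysis.Analysis" "HOL-Algebra.Group_Action"
begin

definition cell_space :: "('g, 'b) monoid_scheme \<Rightarrow> 'm set \<Rightarrow> ('g \<Rightarrow> 'm \<Rightarrow> 'm) \<Rightarrow> 'm \<Rightarrow> ('m \<Rightarrow> 'g) \<Rightarrow> bool"
  where "cell_space G M act m0 gf \<longleftrightarrow>
    group G \<and> transitive_action G M act \<and> m0 \<in> M \<and>
    (\<forall>m\<in>M. gf m \<in> carrier G \<and> act (gf m) m0 = m)"

definition stab0 :: "('g, 'b) monoid_scheme \<Rightarrow> ('g \<Rightarrow> 'm \<Rightarrow> 'm) \<Rightarrow> 'm \<Rightarrow> 'g set"
  where "stab0 G act m0 = stabilizer G act m0"

definition lcosets0 :: "('g, 'b) monoid_scheme \<Rightarrow> ('g \<Rightarrow> 'm \<Rightarrow> 'm) \<Rightarrow> 'm \<Rightarrow> 'g set set"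
  where "lcosets0 G act m0 = {g <#\<^bsub>G\<^esub> stab0 G act m0 | g. g \<in> carrier G}"

text \<open>Right semi-action: m \<triangleleft> gG0 = (gf m * g) \<triangleright> m0 (independent of the chosen representative g).\<close>
definition rsemi :: "('g, 'b) monoid_scheme \<Rightarrow> ('g \<Rightarrow> 'm \<Rightarrow> 'm) \<Rightarrow> 'm \<Rightarrow> ('m \<Rightarrow> 'g) \<Rightarrow> 'm \<Rightarrow> 'g set \<Rightarrow> 'm"
  where "rsemi G act m0 gf m C = act (gf m \<otimes>\<^bsub>G\<^esub> (SOME g. g \<in> C)) m0"

definition right_amenable :: "('g, 'b) monoid_scheme \<Rightarrow> 'm set \<Rightarrow> ('g \<Rightarrow> 'm \<Rightarrow> 'm) \<Rightarrow> 'm \<Rightarrow> ('m \<Rightarrow> 'g) \<Rightarrow> bool"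
  where "right_amenable G M act m0 gf \<longleftrightarrow>
    (\<exists>\<mu> :: 'm set \<Rightarrow> real.
       (\<forall>A. A \<subseteq> M \<longrightarrow> \<mu> A \<ge> 0) \<and> \<mu> M = 1 \<and>
       (\<forall>A B. A \<subseteq> M \<longrightarrow> B \<subseteq> M \<longrightarrow> A \<inter> B = {} \<longrightarrow> \<mu> (A \<union> B) = \<mu> A + \<mu> B) \<and>
       (\<forall>C\<in>lcosets0 G act m0. \<forall>A. A \<subseteq> M \<longrightarrow> inj_on (\<lambda>m. rsemi G act m0 gf m C) A \<longrightarrow>
          \<mu> ((\<lambda>a. rsemi G act m0 gf a C) ` A) = \<mu> A))"

definition directed_set :: "'i set \<Rightarrow> ('i \<Rightarrow> 'i \<Rightarrow> bool) \<Rightarrow> bool"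
  where "directed_set I rel \<longleftrightarrow> I \<noteq> {} \<and> (\<forall>i\<in>I. rel i i) \<and>
    (\<forall>i\<in>I. \<forall>j\<in>I. \<forall>k\<in>I. rel i j \<longrightarrow> rel j k \<longrightarrow> rel i k) \<and>
    (\<forall>i\<in>I. \<forall>j\<in>I. \<exists>k\<in>I. rel i k \<and> rel j k)"

definition net_filter :: "'i set \<Rightarrow> ('i \<Rightarrow> 'i \<Rightarrow> bool) \<Rightarrow> 'i filter"
  where "net_filter I rel = (INF i\<in>I. principal {j\<in>I. rel i j})"

definition right_folner_net :: "('g, 'b) monoid_scheme \<Rightarrow> 'm set \<Rightarrow> ('g \<Rightarrow> 'm \<Rightarrow> 'm) \<Rightarrow> 'm \<Rightarrow> ('m \<Rightarrow> 'g) \<Rightarrow>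
    'i set \<Rightarrow> ('i \<Rightarrow> 'i \<Rightarrow> bool) \<Rightarrow> ('i \<Rightarrow> 'm set) \<Rightarrow> bool"
  where "right_folner_net G M act m0 gf I rel F \<longleftrightarrow>
    directed_set I rel \<and>
    (\<forall>i\<in>I. F i \<subseteq> M \<and> finite (F i) \<and> F i \<noteq> {}) \<and>
    (\<forall>C\<in>lcosets0 G act m0.
       ((\<lambda>i. real (card (F i - {m \<in> M. rsemi G act m0 gf m C \<in> F i})) / real (card (F i)))
          \<longlongrightarrow> 0) (net_filter I rel))"

definition global_trans :: "('g, 'b) monoid_scheme \<Rightarrow> 'm set \<Rightarrow> ('g \<Rightarrow> 'm \<Rightarrow> 'm) \<Rightarrow> 'm \<Rightarrow> ('m \<Rightarrow> 'g) \<Rightarrow>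
    'g set set \<Rightarrow> (('g set \<Rightarrow> 'q) \<Rightarrow> 'q) \<Rightarrow> ('m \<Rightarrow> 'q) \<Rightarrow> ('m \<Rightarrow> 'q)"
  where "global_trans G M act m0 gf N \<delta> c =
    (\<lambda>m\<in>M. \<delta> (\<lambda>n\<in>N. c (rsemi G act m0 gf m n)))"

definition bullet_invariant :: "('g, 'b) monoid_scheme \<Rightarrow> ('g \<Rightarrow> 'm \<Rightarrow> 'm) \<Rightarrow> 'm \<Rightarrow>
    'q set \<Rightarrow> 'g set set \<Rightarrow> (('g set \<Rightarrow> 'q) \<Rightarrow> 'q) \<Rightarrow> bool"
  where "bullet_invariant G act m0 Q N \<delta> \<longleftrightarrow>
    (\<forall>g0\<in>stab0 G act m0. \<forall>l\<in>N \<rightarrow>\<^sub>E Q.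
       \<delta> (\<lambda>n\<in>N. l (inv\<^bsub>G\<^esub> g0 <#\<^bsub>G\<^esub> n)) = \<delta> l)"

definition pre_injective :: "'m set \<Rightarrow> 'q set \<Rightarrow> (('m \<Rightarrow> 'q) \<Rightarrow> ('m \<Rightarrow> 'q)) \<Rightarrow> bool"
  where "pre_injective M Q \<Delta> \<longleftrightarrow>
    (\<forall>c\<in>M \<rightarrow>\<^sub>E Q. \<forall>c'\<in>M \<rightarrow>\<^sub>E Q.
       finite {m\<in>M. c m \<noteq> c' m} \<longrightarrow> \<Delta> c = \<Delta> c' \<longrightarrow> c = c')"

definition entropy :: "'i set \<Rightarrow> ('i \<Rightarrow> 'i \<Rightarrow> bool) \<Rightarrow> ('i \<Rightarrow> 'm set) \<Rightarrow> ('m \<Rightarrow> 'q) set \<Rightarrow> ereal"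
  where "entropy I rel F X =
    Limsup (net_filter I rel)
      (\<lambda>i. ereal (ln (real (card ((\<lambda>c. restrict c (F i)) ` X))) / real (card (F i))))"

end

theory Submission
  imports Defs
begin

text \<open>Let \<open>c\<close> and \<open>c'\<close> be distinct configurations that differ on a finite set \<open>D\<close> and have
  the same image. Enlarge \<open>D\<close> to a finite tile \<open>E\<close> containing every neighbourhood that meets \<open>D\<close>.
  Whenever a configuration carries a translated copy of \<open>c\<close> on a translate of \<open>E\<close>, it may be
  overwritten by the corresponding copy of \<open>c'\<close> without changing the image. Hence every image
  pattern on a finite set \<open>F\<close> is the image of a pattern on the neighbourhood hull of \<open>F\<close> that
  avoids one of the \<open>|Q|^|E|\<close> patterns on each tile of a disjoint family of translates of \<open>E\<close>
  inside \<open>F\<close>. For a maximal such family, the cells of \<open>F\<close> are covered by at most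
  \<open>|E|\<^sup>2 |G0|\<close> cells per tile plus cells pushed out of \<open>F\<close> by the right semi-action; along a
  F{\o}lner net the latter, and the excess of the hull over \<open>F\<close>, become negligible. Counting then
  bounds \<open>log |\<pi>\<^sub>F (\<Delta> (Q\<^sup>M))| / |F|\<close> eventually by \<open>log |Q|\<close> minus a positive constant.\<close>

lemma inj_on_restrict_pieces:
  "inj_on (\<lambda>w. ((\<lambda>h\<in>T. restrict w (b h)), restrict w (U - (\<Union>h\<in>T. b h)))) (U \<rightarrow>\<^sub>E Q)"
proof (rule inj_onI)
  fix w v assume w: "w \<in> U \<rightarrow>\<^sub>E Q" and v: "v \<in> U \<rightarrow>\<^sub>E Q"
    and "((\<lambda>h\<in>T. restrict w (b h)), restrict w (U - (\<Union>h\<in>T. b h)))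
      = ((\<lambda>h\<in>T. restrict v (b h)), restrict v (U - (\<Union>h\<in>T. b h)))"
  then have on_pieces: "(\<lambda>h\<in>T. restrict w (b h)) = (\<lambda>h\<in>T. restrict v (b h))"
    and on_rest: "restrict w (U - (\<Union>h\<in>T. b h)) = restrict v (U - (\<Union>h\<in>T. b h))"
    by simp_all
  show "w = v"
  proof (rule PiE_ext[OF w v])
    fix x assume "x \<in> U"
    then consider h where "h \<in> T" "x \<in> b h" | "x \<in> U - (\<Union>h\<in>T. b h)"
      by blast
    then show "w x = v x"
    proof cases
      case (1 h)
      then show ?thesis
        using fun_cong[OF fun_cong[OF on_pieces, of h], of x] by simp
    next
      case 2
      then show ?thesis
        using fun_cong[OF on_rest, of x] by simp
    qed
  qed
qed

lemma card_PiE_avoiding_patterns_le: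
  fixes U :: "'a set" and T :: "'t set" and b :: "'t \<Rightarrow> 'a set" and p :: "'t \<Rightarrow> 'a \<Rightarrow> 'q"
  assumes T: "finite T" and U: "finite U" and Q: "finite Q"
    and b_sub: "\<And>h. h \<in> T \<Longrightarrow> b h \<subseteq> U" and b_card: "\<And>h. h \<in> T \<Longrightarrow> card (b h) = e"
    and b_disj: "disjoint_family_on b T"
    and p: "\<And>h. h \<in> T \<Longrightarrow> p h \<in> b h \<rightarrow>\<^sub>E Q"
  shows "card {w \<in> U \<rightarrow>\<^sub>E Q. \<forall>h\<in>T. restrict w (b h) \<noteq> p h} * card Q ^ (card T * e)
           \<le> (card Q ^ e - 1) ^ card T * card Q ^ card U"
proof -
  define R where "R = U - (\<Union>h\<in>T. b h)"
  define W where "W = {w \<in> U \<rightarrow>\<^sub>E Q. \<forall>h\<in>T. restrict w (b h) \<noteq> p h}"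
  define P where "P = (\<Pi>\<^sub>E h\<in>T. (b h \<rightarrow>\<^sub>E Q) - {p h}) \<times> (R \<rightarrow>\<^sub>E Q)"
  define restrictions where "restrictions w = ((\<lambda>h\<in>T. restrict w (b h)), restrict w R)" for w :: "'a \<Rightarrow> 'q"
  have b_fin: "finite (b h)" if "h \<in> T" for h
    using b_sub[OF that] U finite_subset by blast
  have "card (\<Union>h\<in>T. b h) = card T * e"
    using card_UN_disjoint'[OF b_disj b_fin T] b_card by simp
  moreover have "(\<Union>h\<in>T. b h) \<subseteq> U"
    using b_sub by blast
  ultimately have card_R: "card R + card T * e = card U"
    unfolding R_def by (metis U card_Diff_subset card_mono finite_subset le_add_diff_inverse2)
  have "W \<subseteq> U \<rightarrow>\<^sub>E Q"
    unfolding W_def by blast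
  then have "inj_on restrictions W"
    unfolding restrictions_def R_def by (rule inj_on_subset[OF inj_on_restrict_pieces])
  moreover have "restrictions ` W \<subseteq> P"
  proof
    fix y assume "y \<in> restrictions ` W"
    then obtain w where w: "w \<in> U \<rightarrow>\<^sub>E Q" "\<forall>h\<in>T. restrict w (b h) \<noteq> p h" and y: "y = restrictions w"
      unfolding W_def by blast
    have "restrict w (b h) \<in> (b h \<rightarrow>\<^sub>E Q) - {p h}" if "h \<in> T" for h
      using w b_sub[OF that] that by (auto simp: PiE_iff)
    moreover have "restrict w R \<in> R \<rightarrow>\<^sub>E Q"
      using w unfolding R_def by (auto simp: PiE_iff)
    ultimately show "y \<in> P"
      unfolding y restrictions_def P_def by auto
  qed
  moreover have "card P = (card Q ^ e - 1) ^ card T * card Q ^ card R"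
  proof -
    have "card ((b h \<rightarrow>\<^sub>E Q) - {p h}) = card Q ^ e - 1" if "h \<in> T" for h
      using p[OF that] card_funcsetE[OF b_fin[OF that], of Q] b_card[OF that] by (simp add: card_Diff_singleton)
    moreover have "finite R"
      using U unfolding R_def by simp
    ultimately show ?thesis
      unfolding P_def using T by (simp add: card_cartesian_product card_PiE card_funcsetE)
  qed
  moreover have "finite P"
    unfolding P_def using T U Q b_fin R_def by (simp add: finite_PiE)
  ultimately have "card W \<le> (card Q ^ e - 1) ^ card T * card Q ^ card R"
    by (metis card_inj_on_le)
  then have "card W * card Q ^ (card T * e) \<le> (card Q ^ e - 1) ^ card T * (card Q ^ card R * card Q ^ (card T * e))"
    by (simp add: mult.assoc)
  then show ?thesis
    unfolding W_def using card_R by (simp add: power_add[symmetric])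
qed

lemma ln_le_of_tiling_estimate:
  fixes q A f K :: real and e t u :: nat
  defines "\<beta> \<equiv> ln (q ^ e) - ln (q ^ e - 1)"
  assumes q: "q \<ge> 2" and e: "e \<ge> 1" and K: "K \<ge> 1" and A: "A \<ge> 1"
    and bound: "A * q ^ (t * e) \<le> (q ^ e - 1) ^ t * q ^ u"
    and hull: "real u \<le> f + \<beta> / (4 * K * ln q) * f"
    and tiles: "f \<le> 2 * K * real t"
  shows "ln A \<le> f * (ln q - \<beta> / (4 * K))"
proof -
  have "q ^ e \<ge> 2"
    using q e by (metis order_trans power_increasing power_one_right one_le_numeral)
  then have \<beta>: "\<beta> > 0"
    unfolding \<beta>_def by simp
  have L: "ln q > 0"
    using q by simp
  have "ln A + t * (e * ln q) = ln (A * q ^ (t * e))"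
    using A q by (simp add: ln_mult ln_realpow power_mult)
  also have "\<dots> \<le> ln ((q ^ e - 1) ^ t * q ^ u)"
    using bound A q \<open>q ^ e \<ge> 2\<close> by (subst ln_le_cancel_iff) auto
  also have "\<dots> = t * ln (q ^ e - 1) + u * ln q"
    using \<open>q ^ e \<ge> 2\<close> q by (simp add: ln_mult ln_realpow)
  finally have "ln A \<le> u * ln q - t * \<beta>"
    unfolding \<beta>_def using q by (simp add: ln_realpow algebra_simps)
  also have "\<dots> \<le> (f + \<beta> / (4 * K * ln q) * f) * ln q - f / (2 * K) * \<beta>"
  proof (rule diff_mono)
    show "u * ln q \<le> (f + \<beta> / (4 * K * ln q) * f) * ln q"
      using mult_right_mono[OF hull] L by simp
    show "f / (2 * K) * \<beta> \<le> t * \<beta>"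
      using tiles K \<beta> by (intro mult_right_mono) (simp_all add: field_simps)
  qed
  also have "\<dots> = f * (ln q - \<beta> / (4 * K))"
    using K L by (simp add: field_simps)
  finally show ?thesis .
qed

lemma eventually_sum_le_of_tendsto_zero:
  fixes g :: "'n \<Rightarrow> 'i \<Rightarrow> real" and h :: "'i \<Rightarrow> real"
  assumes "finite S" and lim: "\<And>n. n \<in> S \<Longrightarrow> ((\<lambda>i. g n i / h i) \<longlongrightarrow> 0) F"
    and r: "r > 0" and h: "eventually (\<lambda>i. h i > 0) F"
  shows "eventually (\<lambda>i. (\<Sum>n\<in>S. g n i) \<le> r * h i) F"
proof -
  have "((\<lambda>i. \<Sum>n\<in>S. g n i / h i) \<longlongrightarrow> 0) F"
    using tendsto_sum[OF lim] by simp
  then have "eventually (\<lambda>i. (\<Sum>n\<in>S. g n i / h i) < r) F"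
    using r by (rule order_tendstoD(2))
  then show ?thesis
    using h by eventually_elim (simp add: sum_divide_distrib[symmetric] divide_less_eq less_imp_le)
qed

locale cellular_space = group_action G M act
  for G :: "('g, 'b) monoid_scheme" (structure) and M :: "'m set" and act +
  fixes m0 :: 'm and gf :: "'m \<Rightarrow> 'g"
  assumes base_point: "m0 \<in> M"
    and coord_carrier: "m \<in> M \<Longrightarrow> gf m \<in> carrier G"
    and coord_act: "m \<in> M \<Longrightarrow> act (gf m) m0 = m"

lemma cell_space_imp_cellular_space:
  "cell_space G M act m0 gf \<Longrightarrow> cellular_space G M act m0 gf"
  unfolding cell_space_def cellular_space_def cellular_space_axioms_def
  by (auto dest: transitive_action.axioms(1))

sublocale cellular_space \<subseteq> group G
  using group_hom group_hom.axioms(1) by blast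

context cellular_space
begin

abbreviation G0 :: "'g set" where "G0 \<equiv> stabilizer G act m0"

definition coset_point :: "'g set \<Rightarrow> 'm" where
  "coset_point C = act (SOME g. g \<in> C) m0"

definition right_boundary :: "'m set \<Rightarrow> 'g set \<Rightarrow> 'm set" where
  "right_boundary F C = F - {m \<in> M. rsemi G act m0 gf m C \<in> F}"

lemma act_closed: "g \<in> carrier G \<Longrightarrow> x \<in> M \<Longrightarrow> act g x \<in> M"
  using element_image by blast

lemma act_mult: "g \<in> carrier G \<Longrightarrow> h \<in> carrier G \<Longrightarrow> x \<in> M \<Longrightarrow> act (g \<otimes> h) x = act g (act h x)"
  using composition_rule by blast

lemma act_one: "x \<in> M \<Longrightarrow> act \<one> x = x"
  by (metis id_eq_one restrict_apply')

lemma act_inv_act: "g \<in> carrier G \<Longrightarrow> x \<in> M \<Longrightarrow> act (inv g) (act g x) = x"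
  by (metis act_one act_mult inv_closed l_inv)

lemma stabilizer_iff: "h \<in> G0 \<longleftrightarrow> h \<in> carrier G \<and> act h m0 = m0"
  by (simp add: stabilizer_def)

lemma l_coset_stabilizer_nonempty: "g \<in> carrier G \<Longrightarrow> g \<in> g <#\<^bsub>G\<^esub> G0"
  using stabilizer_one_closed[OF base_point] unfolding l_coset_def by force

lemma coset_point_l_coset:
  assumes g: "g \<in> carrier G"
  shows "coset_point (g <#\<^bsub>G\<^esub> G0) = act g m0"
proof -
  have "(SOME s. s \<in> g <#\<^bsub>G\<^esub> G0) \<in> g <#\<^bsub>G\<^esub> G0"
    using l_coset_stabilizer_nonempty[OF g] by (rule someI)
  then obtain h where "h \<in> G0" "(SOME s. s \<in> g <#\<^bsub>G\<^esub> G0) = g \<otimes> h"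
    unfolding l_coset_def by blast
  then show ?thesis
    unfolding coset_point_def using g act_mult base_point stabilizer_iff by auto
qed

lemma lcosets0_cases:
  assumes "C \<in> lcosets0 G act m0"
  obtains g where "g \<in> carrier G" "C = g <#\<^bsub>G\<^esub> G0"
  using assms unfolding lcosets0_def stab0_def by blast

lemma coset_point_closed: "C \<in> lcosets0 G act m0 \<Longrightarrow> coset_point C \<in> M"
  by (metis lcosets0_cases coset_point_l_coset act_closed base_point)

lemma rsemi_conv_coset_point:
  assumes m: "m \<in> M" and C: "C \<in> lcosets0 G act m0"
  shows "rsemi G act m0 gf m C = act (gf m) (coset_point C)"
proof -
  obtain g where g: "g \<in> carrier G" "C = g <#\<^bsub>G\<^esub> G0"
    using lcosets0_cases[OF C] .
  have "(SOME s. s \<in> C) \<in> C"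
    unfolding g(2) using l_coset_stabilizer_nonempty[OF g(1)] by (rule someI)
  then have "(SOME s. s \<in> C) \<in> carrier G"
    using l_coset_subset_G[OF stabilizer_subset g(1)] g(2) by blast
  then show ?thesis
    unfolding rsemi_def coset_point_def using act_mult[OF coord_carrier[OF m] _ base_point] by simp
qed

lemma coord_coset:
  assumes "m \<in> M"
  shows "gf m <#\<^bsub>G\<^esub> G0 \<in> lcosets0 G act m0" and "coset_point (gf m <#\<^bsub>G\<^esub> G0) = m"
  using assms coord_carrier coord_act coset_point_l_coset unfolding lcosets0_def stab0_def by auto

lemma coset_point_l_coset_mult:
  assumes g0: "g0 \<in> carrier G" and C: "C \<in> lcosets0 G act m0"
  shows "g0 <#\<^bsub>G\<^esub> C \<in> lcosets0 G act m0" and "coset_point (g0 <#\<^bsub>G\<^esub> C) = act g0 (coset_point C)"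
proof -
  obtain g where g: "g \<in> carrier G" "C = g <#\<^bsub>G\<^esub> G0"
    using lcosets0_cases[OF C] .
  have eq: "g0 <#\<^bsub>G\<^esub> C = (g0 \<otimes> g) <#\<^bsub>G\<^esub> G0"
    unfolding g(2) using g(1) g0 lcos_m_assoc stabilizer_subset by blast
  then show "g0 <#\<^bsub>G\<^esub> C \<in> lcosets0 G act m0"
    unfolding lcosets0_def stab0_def using g g0 by auto
  have "coset_point ((g0 \<otimes> g) <#\<^bsub>G\<^esub> G0) = act g0 (act g m0)"
    using coset_point_l_coset act_mult[OF g0 g(1) base_point] g(1) g0 by simp
  then show "coset_point (g0 <#\<^bsub>G\<^esub> C) = act g0 (coset_point C)"
    unfolding eq using g(2) coset_point_l_coset[OF g(1)] by simp
qed

lemma right_folner_netD: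
  assumes "right_folner_net G M act m0 gf I rel F"
  shows "directed_set I rel"
    and "\<And>i. i \<in> I \<Longrightarrow> F i \<subseteq> M \<and> finite (F i) \<and> F i \<noteq> {}"
    and "\<And>C. C \<in> lcosets0 G act m0 \<Longrightarrow>
      ((\<lambda>i. real (card (right_boundary (F i) C)) / real (card (F i))) \<longlongrightarrow> 0) (net_filter I rel)"
  using assms unfolding right_folner_net_def right_boundary_def by blast+

lemma eventually_in_index_set:
  assumes "right_folner_net G M act m0 gf I rel F"
  shows "eventually (\<lambda>i. i \<in> I) (net_filter I rel)"
proof -
  obtain i0 where "i0 \<in> I"
    using right_folner_netD(1)[OF assms] unfolding directed_set_def by blast
  then show ?thesis
    unfolding net_filter_def by (rule eventually_INF1) (simp add: eventually_principal)
qed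

lemma eventually_sum_right_boundary_le:
  fixes r :: real
  assumes folner: "right_folner_net G M act m0 gf I rel F"
    and S: "finite S" "\<And>s. s \<in> S \<Longrightarrow> C s \<in> lcosets0 G act m0" and r: "r > 0"
  shows "eventually (\<lambda>i. (\<Sum>s\<in>S. real (card (right_boundary (F i) (C s)))) \<le> r * card (F i))
    (net_filter I rel)"
proof (rule eventually_sum_le_of_tendsto_zero)
  show "finite S" "r > 0"
    using S(1) r .
  show "((\<lambda>i. real (card (right_boundary (F i) (C s))) / real (card (F i))) \<longlongrightarrow> 0) (net_filter I rel)"
    if "s \<in> S" for s
    using right_folner_netD(3)[OF folner S(2)[OF that]] .
  show "eventually (\<lambda>i. real (card (F i)) > 0) (net_filter I rel)"
    using eventually_in_index_set[OF folner]
    by eventually_elim (use right_folner_netD(2)[OF folner] in \<open>simp add: card_gt_0_iff\<close>)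
qed

text \<open>The elements moving \<open>a\<close> to \<open>b\<close> form a coset of the stabiliser of \<open>a\<close>, a conjugate of \<open>G0\<close>.\<close>

lemma finite_card_fibre:
  assumes G0: "finite G0" and a: "a \<in> M"
  shows "finite {g \<in> carrier G. act g a = b} \<and> card {g \<in> carrier G. act g a = b} \<le> card G0"
proof (cases "{g \<in> carrier G. act g a = b} = {}")
  case True
  then show ?thesis
    unfolding True by simp
next
  case False
  then obtain g1 where g1: "g1 \<in> carrier G" "act g1 a = b"
    by blast
  define f where "f g = inv (gf a) \<otimes> (inv g1 \<otimes> g) \<otimes> gf a" for g
  have ga: "gf a \<in> carrier G"
    using coord_carrier a by auto
  have inj: "inj_on f {g \<in> carrier G. act g a = b}"
    unfolding f_def inj_on_def using ga g1 by (auto simp: m_assoc)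
  have into: "f ` {g \<in> carrier G. act g a = b} \<subseteq> G0"
  proof (rule image_subsetI)
    fix g assume "g \<in> {g \<in> carrier G. act g a = b}"
    then have g: "g \<in> carrier G" "act g a = b"
      by simp_all
    have "act (f g) m0 = act (inv (gf a)) (act (inv g1) (act g a))"
      unfolding f_def using g ga g1 base_point a coord_act by (simp add: act_mult act_closed)
    also have "\<dots> = act (inv (gf a)) a"
      using act_inv_act[OF g1(1) a] by (simp only: g(2) g1(2))
    also have "\<dots> = m0"
      using act_inv_act[OF ga base_point] by (simp only: coord_act[OF a])
    finally show "f g \<in> G0"
      using stabilizer_iff g ga g1 unfolding f_def by auto
  qed
  show ?thesis
    using card_inj_on_le[OF inj into G0] inj_on_finite[OF inj into G0] by blast
qed

end

locale semi_cellular_automaton = cellular_space G M act m0 gf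
  for G :: "('g, 'b) monoid_scheme" (structure) and M :: "'m set" and act m0 gf +
  fixes Q :: "'q set" and N :: "'g set set" and \<delta> :: "('g set \<Rightarrow> 'q) \<Rightarrow> 'q"
  assumes finite_stabilizer: "finite (stabilizer G act m0)"
    and finite_states: "finite Q" and states_nonempty: "Q \<noteq> {}"
    and neighbourhood_cosets: "N \<subseteq> lcosets0 G act m0" and finite_neighbourhood: "finite N"
    and neighbourhood_stable: "\<forall>g0\<in>stab0 G act m0. \<forall>n\<in>N. g0 <#\<^bsub>G\<^esub> n \<in> N"
    and local_rule_closed: "\<forall>l\<in>N \<rightarrow>\<^sub>E Q. \<delta> l \<in> Q"
    and local_rule_invariant: "bullet_invariant G act m0 Q N \<delta>"
begin

abbreviation \<Delta> :: "('m \<Rightarrow> 'q) \<Rightarrow> 'm \<Rightarrow> 'q" where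
  "\<Delta> \<equiv> global_trans G M act m0 gf N \<delta>"

definition neighbourhood_hull :: "'m set \<Rightarrow> 'm set" where
  "neighbourhood_hull F = F \<union> (\<lambda>(m, n). act (gf m) (coset_point n)) ` (F \<times> N)"

lemma card_stabilizer_ge_1: "card G0 \<ge> 1"
proof -
  have "G0 \<noteq> {}"
    using stabilizer_one_closed[OF base_point] by blast
  then show ?thesis
    using finite_stabilizer by (simp add: Suc_le_eq card_gt_0_iff)
qed

lemma neighbour_closed: "n \<in> N \<Longrightarrow> coset_point n \<in> M"
  using coset_point_closed neighbourhood_cosets by blast

lemma global_trans_apply:
  "m \<in> M \<Longrightarrow> \<Delta> z m = \<delta> (\<lambda>n\<in>N. z (act (gf m) (coset_point n)))"
  unfolding global_trans_def using rsemi_conv_coset_point neighbourhood_cosets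
  by (auto intro!: arg_cong[where f = \<delta>] restrict_ext)

lemma global_trans_eqI:
  assumes "\<And>m. m \<in> M \<Longrightarrow> \<Delta> z m = \<Delta> z' m"
  shows "\<Delta> z = \<Delta> z'"
proof
  fix m
  show "\<Delta> z m = \<Delta> z' m"
    using assms[of m] by (cases "m \<in> M") (simp_all add: global_trans_def)
qed

lemma global_trans_cong:
  assumes "m \<in> M" and "\<And>n. n \<in> N \<Longrightarrow> z (act (gf m) (coset_point n)) = z' (act (gf m) (coset_point n))"
  shows "\<Delta> z m = \<Delta> z' m"
  using assms global_trans_apply by (metis (no_types, lifting) restrict_ext)

lemma global_trans_PiE:
  assumes z: "z \<in> M \<rightarrow>\<^sub>E Q"
  shows "\<Delta> z \<in> M \<rightarrow>\<^sub>E Q"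
proof -
  have "\<Delta> z m \<in> Q" if m: "m \<in> M" for m
  proof -
    have "(\<lambda>n\<in>N. z (act (gf m) (coset_point n))) \<in> N \<rightarrow>\<^sub>E Q"
      using z m coord_carrier neighbour_closed act_closed by (auto simp: PiE_iff)
    then show ?thesis
      using global_trans_apply[OF m] local_rule_closed by simp
  qed
  then show ?thesis
    unfolding global_trans_def by (auto simp: PiE_iff)
qed

text \<open>Thanks to the \<open>\<bullet>\<close>-invariance of \<open>\<delta>\<close>, any representative \<open>k\<close> of a cell may replace
  the chosen one \<open>gf (act k m0)\<close>.\<close>

lemma global_trans_act:
  assumes z: "z \<in> M \<rightarrow>\<^sub>E Q" and k: "k \<in> carrier G"
  shows "\<Delta> z (act k m0) = \<delta> (\<lambda>n\<in>N. z (act k (coset_point n)))"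
proof -
  define m where "m = act k m0"
  define g where "g = gf m"
  define g0 where "g0 = inv g \<otimes> k"
  define l where "l = (\<lambda>n\<in>N. z (act g (coset_point n)))"
  have m: "m \<in> M"
    unfolding m_def using k base_point act_closed by simp
  have g: "g \<in> carrier G" "act g m0 = m"
    unfolding g_def using coord_carrier coord_act m by auto
  have g0C: "g0 \<in> carrier G"
    unfolding g0_def using g k by simp
  have "act g0 m0 = act (inv g) m"
    unfolding g0_def m_def using g k base_point act_mult by simp
  also have "\<dots> = m0"
    using g act_inv_act base_point by metis
  finally have g0: "g0 \<in> G0"
    using stabilizer_iff g0C by simp
  have k_eq: "k = g \<otimes> g0"
    unfolding g0_def using g k by (simp add: m_assoc[symmetric])
  have "l \<in> N \<rightarrow>\<^sub>E Q"
    unfolding l_def using z g neighbour_closed act_closed by (auto simp: PiE_iff)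
  moreover have "inv g0 \<in> stab0 G act m0"
    using stabilizer_m_inv_closed[OF base_point g0] unfolding stab0_def .
  ultimately have "\<delta> (\<lambda>n\<in>N. l (inv (inv g0) <#\<^bsub>G\<^esub> n)) = \<delta> l"
    using local_rule_invariant unfolding bullet_invariant_def by blast
  moreover have "(\<lambda>n\<in>N. l (inv (inv g0) <#\<^bsub>G\<^esub> n)) = (\<lambda>n\<in>N. z (act k (coset_point n)))"
  proof (rule restrict_ext)
    fix n assume n: "n \<in> N"
    then have "g0 <#\<^bsub>G\<^esub> n \<in> N"
      using neighbourhood_stable g0 unfolding stab0_def by blast
    moreover have "coset_point (g0 <#\<^bsub>G\<^esub> n) = act g0 (coset_point n)"
      using coset_point_l_coset_mult[OF g0C] n neighbourhood_cosets by blast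
    ultimately show "l (inv (inv g0) <#\<^bsub>G\<^esub> n) = z (act k (coset_point n))"
      unfolding l_def k_eq using g g0C act_mult neighbour_closed[OF n] by simp
  qed
  ultimately show ?thesis
    using global_trans_apply[OF m] unfolding m_def[symmetric] l_def g_def by simp
qed

lemma finite_neighbourhood_hull: "finite F \<Longrightarrow> finite (neighbourhood_hull F)"
  unfolding neighbourhood_hull_def using finite_neighbourhood by simp

lemma neighbourhood_hull_subset: "F \<subseteq> M \<Longrightarrow> neighbourhood_hull F \<subseteq> M"
  unfolding neighbourhood_hull_def using coord_carrier neighbour_closed act_closed by auto

lemma subset_neighbourhood_hull: "F \<subseteq> neighbourhood_hull F"
  unfolding neighbourhood_hull_def by simp

lemma neighbour_in_neighbourhood_hull:
  "m \<in> F \<Longrightarrow> n \<in> N \<Longrightarrow> act (gf m) (coset_point n) \<in> neighbourhood_hull F"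
  unfolding neighbourhood_hull_def by force

lemma card_neighbourhood_hull_le:
  assumes F: "finite F" "F \<subseteq> M"
  shows "card (neighbourhood_hull F) \<le> card F + (\<Sum>n\<in>N. card (right_boundary F n))"
proof -
  have "neighbourhood_hull F \<subseteq> F \<union> (\<Union>n\<in>N. (\<lambda>m. act (gf m) (coset_point n)) ` right_boundary F n)"
  proof
    fix x assume "x \<in> neighbourhood_hull F"
    then consider "x \<in> F" | m n where "m \<in> F" "n \<in> N" "x = act (gf m) (coset_point n)"
      unfolding neighbourhood_hull_def by auto
    then show "x \<in> F \<union> (\<Union>n\<in>N. (\<lambda>m. act (gf m) (coset_point n)) ` right_boundary F n)"
    proof cases
      case 2
      then have "x \<notin> F \<Longrightarrow> m \<in> right_boundary F n"
        unfolding right_boundary_def using rsemi_conv_coset_point F neighbourhood_cosets by auto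
      with 2 show ?thesis
        by blast
    qed simp
  qed
  then have "card (neighbourhood_hull F)
      \<le> card (F \<union> (\<Union>n\<in>N. (\<lambda>m. act (gf m) (coset_point n)) ` right_boundary F n))"
    using F finite_neighbourhood unfolding right_boundary_def by (intro card_mono) auto
  also have "\<dots> \<le> card F + card (\<Union>n\<in>N. (\<lambda>m. act (gf m) (coset_point n)) ` right_boundary F n)"
    by (rule card_Un_le)
  also have "\<dots> \<le> card F + (\<Sum>n\<in>N. card ((\<lambda>m. act (gf m) (coset_point n)) ` right_boundary F n))"
    using card_UN_le[OF finite_neighbourhood] by simp
  also have "\<dots> \<le> card F + (\<Sum>n\<in>N. card (right_boundary F n))"
    using F unfolding right_boundary_def by (intro add_left_mono sum_mono card_image_le) simp
  finally show ?thesis .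
qed

lemma card_restrict_image_ge_1:
  assumes F: "finite F" "F \<subseteq> M"
  shows "card ((\<lambda>y. restrict y F) ` \<Delta> ` (M \<rightarrow>\<^sub>E Q)) \<ge> 1"
proof -
  have "(\<lambda>y. restrict y F) ` \<Delta> ` (M \<rightarrow>\<^sub>E Q) \<subseteq> F \<rightarrow>\<^sub>E Q"
    using global_trans_PiE F(2) by (auto simp: PiE_iff)
  then have "finite ((\<lambda>y. restrict y F) ` \<Delta> ` (M \<rightarrow>\<^sub>E Q))"
    using finite_PiE[OF F(1), of "\<lambda>_. Q"] finite_states finite_subset by blast
  moreover have "(\<lambda>y. restrict y F) ` \<Delta> ` (M \<rightarrow>\<^sub>E Q) \<noteq> {}"
    using states_nonempty by (simp add: PiE_eq_empty_iff)
  ultimately show ?thesis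
    by (simp add: Suc_le_eq card_gt_0_iff)
qed

lemma restrict_global_trans_cong:
  assumes "F \<subseteq> M" and "\<And>x. x \<in> neighbourhood_hull F \<Longrightarrow> z x = z' x"
  shows "restrict (\<Delta> z) F = restrict (\<Delta> z') F"
  using assms by (intro restrict_ext global_trans_cong) (auto intro: neighbour_in_neighbourhood_hull)

end

locale mutually_erasable = semi_cellular_automaton G M act m0 gf Q N \<delta>
  for G :: "('g, 'b) monoid_scheme" (structure) and M :: "'m set" and act m0 gf
    and Q :: "'q set" and N \<delta> +
  fixes c c' :: "'m \<Rightarrow> 'q"
  assumes c_PiE: "c \<in> M \<rightarrow>\<^sub>E Q" and c'_PiE: "c' \<in> M \<rightarrow>\<^sub>E Q"
    and finite_diff: "finite {m \<in> M. c m \<noteq> c' m}"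
    and diff_nonempty: "{m \<in> M. c m \<noteq> c' m} \<noteq> {}"
    and same_image: "global_trans G M act m0 gf N \<delta> c = global_trans G M act m0 gf N \<delta> c'"
begin

definition diff_cells :: "'m set" where
  "diff_cells = {m \<in> M. c m \<noteq> c' m}"

definition touching :: "'g set" where
  "touching = {g \<in> carrier G. \<exists>n\<in>N. act g (coset_point n) \<in> diff_cells}"

text \<open>The tile contains the whole neighbourhood of every cell whose neighbourhood meets
  \<open>diff_cells\<close>. Hence replacing a translated copy of \<open>c\<close> on a translate of the tile by the
  corresponding copy of \<open>c'\<close> leaves the image under \<open>\<Delta>\<close> unchanged.\<close>

definition tile :: "'m set" where
  "tile = diff_cells \<union> (\<lambda>(g, n). act g (coset_point n)) ` (touching \<times> N)"

lemma diff_cells_subset: "diff_cells \<subseteq> M"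
  unfolding diff_cells_def by auto

lemma finite_touching: "finite touching"
proof -
  have "touching = (\<Union>n\<in>N. \<Union>d\<in>diff_cells. {g \<in> carrier G. act g (coset_point n) = d})"
    unfolding touching_def by blast
  then show ?thesis
    using finite_neighbourhood finite_diff finite_card_fibre[OF finite_stabilizer] neighbour_closed
    unfolding diff_cells_def by simp
qed

lemma finite_tile: "finite tile"
  unfolding tile_def diff_cells_def using finite_touching finite_neighbourhood finite_diff by simp

lemma tile_subset: "tile \<subseteq> M"
  unfolding tile_def touching_def using diff_cells_subset act_closed neighbour_closed by auto

lemma diff_cells_subset_tile: "diff_cells \<subseteq> tile"
  unfolding tile_def by simp

lemma tile_nonempty: "tile \<noteq> {}"
  using diff_cells_subset_tile diff_nonempty unfolding diff_cells_def by auto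

lemma neighbour_in_tile: "k \<in> touching \<Longrightarrow> n \<in> N \<Longrightarrow> act k (coset_point n) \<in> tile"
  unfolding tile_def by force

lemma global_trans_eq_on_translated_copies:
  assumes z: "z \<in> M \<rightarrow>\<^sub>E Q" and z': "z' \<in> M \<rightarrow>\<^sub>E Q" and h: "h \<in> carrier G" and k: "k \<in> touching"
    and copy: "\<And>n. n \<in> N \<Longrightarrow> z (act h (act k (coset_point n))) = c (act k (coset_point n))"
    and copy': "\<And>n. n \<in> N \<Longrightarrow> z' (act h (act k (coset_point n))) = c' (act k (coset_point n))"
  shows "\<Delta> z (act (h \<otimes> k) m0) = \<Delta> z' (act (h \<otimes> k) m0)"
proof -
  have kC: "k \<in> carrier G"
    using k unfolding touching_def by simp
  have hk: "act (h \<otimes> k) (coset_point n) = act h (act k (coset_point n))" if "n \<in> N" for n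
    using act_mult[OF h kC neighbour_closed[OF that]] .
  have "\<Delta> z (act (h \<otimes> k) m0) = \<delta> (\<lambda>n\<in>N. c (act k (coset_point n)))"
    using global_trans_act[OF z m_closed[OF h kC]] hk copy by (simp cong: restrict_cong)
  also have "\<dots> = \<Delta> c (act k m0)"
    using global_trans_act[OF c_PiE kC] by simp
  also have "\<dots> = \<Delta> c' (act k m0)"
    using same_image by simp
  also have "\<dots> = \<delta> (\<lambda>n\<in>N. c' (act k (coset_point n)))"
    using global_trans_act[OF c'_PiE kC] by simp
  also have "\<dots> = \<Delta> z' (act (h \<otimes> k) m0)"
    using global_trans_act[OF z' m_closed[OF h kC]] hk copy' by (simp cong: restrict_cong)
  finally show ?thesis .
qed

definition patch :: "'g set \<Rightarrow> ('m \<Rightarrow> 'q) \<Rightarrow> 'm \<Rightarrow> 'q" where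
  "patch A z = (\<lambda>m\<in>M. if \<exists>h\<in>A. m \<in> act h ` tile
     then c' (act (inv (SOME h. h \<in> A \<and> m \<in> act h ` tile)) m) else z m)"

lemma patch_on_tile:
  assumes A: "A \<subseteq> carrier G" "disjoint_family_on (\<lambda>h. act h ` tile) A"
    and h: "h \<in> A" and e: "e \<in> tile"
  shows "patch A z (act h e) = c' e"
proof -
  have hC: "h \<in> carrier G" and eM: "e \<in> M"
    using h e A tile_subset by auto
  have "(SOME h'. h' \<in> A \<and> act h e \<in> act h' ` tile) = h"
  proof (rule some_equality)
    fix h' assume "h' \<in> A \<and> act h e \<in> act h' ` tile"
    then show "h' = h"
      using A(2) h e unfolding disjoint_family_on_def by blast
  qed (use h e in blast)
  then show ?thesis
    unfolding patch_def using h e act_closed[OF hC eM] act_inv_act[OF hC eM] by auto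
qed

lemma patch_outside_tiles:
  "x \<in> M \<Longrightarrow> \<forall>h\<in>A. x \<notin> act h ` tile \<Longrightarrow> patch A z x = z x"
  unfolding patch_def by auto

lemma patch_PiE:
  assumes A: "A \<subseteq> carrier G" "disjoint_family_on (\<lambda>h. act h ` tile) A" and z: "z \<in> M \<rightarrow>\<^sub>E Q"
  shows "patch A z \<in> M \<rightarrow>\<^sub>E Q"
proof -
  have "patch A z m \<in> Q" if m: "m \<in> M" for m
  proof (cases "\<exists>h\<in>A. m \<in> act h ` tile")
    case True
    then obtain h e where "h \<in> A" "e \<in> tile" "m = act h e"
      by blast
    then show ?thesis
      using patch_on_tile[OF A] c'_PiE tile_subset by (auto simp: PiE_iff)
  next
    case False
    then show ?thesis
      using patch_outside_tiles m z by (auto simp: PiE_iff)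
  qed
  then show ?thesis
    unfolding patch_def by (auto simp: PiE_iff)
qed

lemma global_trans_patch_near_diff:
  assumes A: "A \<subseteq> carrier G" "disjoint_family_on (\<lambda>h. act h ` tile) A" and z: "z \<in> M \<rightarrow>\<^sub>E Q"
    and copies: "\<And>h e. h \<in> A \<Longrightarrow> e \<in> tile \<Longrightarrow> z (act h e) = c e"
    and g: "g \<in> carrier G" and h: "h \<in> A" and n': "n' \<in> N"
    and near: "act g (coset_point n') \<in> act h ` diff_cells"
  shows "\<Delta> (patch A z) (act g m0) = \<Delta> z (act g m0)"
proof -
  define k where "k = inv h \<otimes> g"
  have hC: "h \<in> carrier G"
    using h A by auto
  have hk: "h \<otimes> k = g"
    unfolding k_def using hC g by (simp add: m_assoc[symmetric])
  obtain d where d: "d \<in> diff_cells" "act g (coset_point n') = act h d"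
    using near by blast
  then have "act k (coset_point n') = d"
    unfolding k_def using act_mult hC g neighbour_closed[OF n'] act_inv_act diff_cells_subset
    by auto
  then have k: "k \<in> touching"
    unfolding touching_def k_def using hC g n' d by auto
  have "\<Delta> z (act (h \<otimes> k) m0) = \<Delta> (patch A z) (act (h \<otimes> k) m0)"
    using global_trans_eq_on_translated_copies[OF z patch_PiE[OF A z] hC k]
      copies[OF h] patch_on_tile[OF A h] neighbour_in_tile[OF k] by simp
  then show ?thesis
    unfolding hk by simp
qed

lemma global_trans_patch_away_from_diff:
  assumes A: "A \<subseteq> carrier G" "disjoint_family_on (\<lambda>h. act h ` tile) A"
    and copies: "\<And>h e. h \<in> A \<Longrightarrow> e \<in> tile \<Longrightarrow> z (act h e) = c e"
    and m: "m \<in> M" and away: "\<forall>h\<in>A. \<forall>n\<in>N. act (gf m) (coset_point n) \<notin> act h ` diff_cells"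
  shows "\<Delta> (patch A z) m = \<Delta> z m"
proof (rule global_trans_cong[OF m])
  fix n assume n: "n \<in> N"
  show "patch A z (act (gf m) (coset_point n)) = z (act (gf m) (coset_point n))"
  proof (cases "\<exists>h\<in>A. act (gf m) (coset_point n) \<in> act h ` tile")
    case True
    then obtain h e where h: "h \<in> A" and e: "e \<in> tile" and x: "act (gf m) (coset_point n) = act h e"
      by blast
    then have "e \<notin> diff_cells"
      using away n by blast
    then have "c' e = z (act h e)"
      using e tile_subset copies[OF h e] unfolding diff_cells_def by auto
    then show ?thesis
      using patch_on_tile[OF A h e] x by simp
  next
    case False
    then show ?thesis
      using patch_outside_tiles act_closed[OF coord_carrier[OF m] neighbour_closed[OF n]] by simp
  qed
qed

lemma global_trans_patch:
  assumes A: "A \<subseteq> carrier G" "disjoint_family_on (\<lambda>h. act h ` tile) A" and z: "z \<in> M \<rightarrow>\<^sub>E Q"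
    and copies: "\<And>h e. h \<in> A \<Longrightarrow> e \<in> tile \<Longrightarrow> z (act h e) = c e"
  shows "\<Delta> (patch A z) = \<Delta> z"
proof (rule global_trans_eqI)
  fix m assume m: "m \<in> M"
  show "\<Delta> (patch A z) m = \<Delta> z m"
  proof (cases "\<exists>h\<in>A. \<exists>n\<in>N. act (gf m) (coset_point n) \<in> act h ` diff_cells")
    case True
    then show ?thesis
      using global_trans_patch_near_diff[OF A z copies coord_carrier[OF m]] coord_act[OF m] by metis
  next
    case False
    then show ?thesis
      using global_trans_patch_away_from_diff[OF A copies m] by blast
  qed
qed

lemma exists_same_image_avoiding_copies:
  assumes T: "T \<subseteq> carrier G" "disjoint_family_on (\<lambda>h. act h ` tile) T" and z: "z \<in> M \<rightarrow>\<^sub>E Q"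
  shows "\<exists>z'\<in>M \<rightarrow>\<^sub>E Q. \<Delta> z' = \<Delta> z \<and> (\<forall>h\<in>T. \<exists>e\<in>tile. z' (act h e) \<noteq> c e)"
proof -
  define A where "A = {h \<in> T. \<forall>e\<in>tile. z (act h e) = c e}"
  have A: "A \<subseteq> carrier G" "disjoint_family_on (\<lambda>h. act h ` tile) A"
    using T disjoint_family_on_mono[of A T] unfolding A_def by auto
  have "\<exists>e\<in>tile. patch A z (act h e) \<noteq> c e" if h: "h \<in> T" for h
  proof (cases "h \<in> A")
    case True
    obtain d where "d \<in> diff_cells"
      using diff_nonempty unfolding diff_cells_def by auto
    then show ?thesis
      using patch_on_tile[OF A True] diff_cells_subset_tile unfolding diff_cells_def by force
  next
    case False
    then obtain e where e: "e \<in> tile" "z (act h e) \<noteq> c e"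
      using h unfolding A_def by auto
    have "act h e \<notin> act h' ` tile" if h': "h' \<in> A" for h'
    proof -
      have "h' \<in> T" "h' \<noteq> h"
        using h' False unfolding A_def by auto
      then have "act h ` tile \<inter> act h' ` tile = {}"
        using T(2) h unfolding disjoint_family_on_def by blast
      then show ?thesis
        using e(1) by blast
    qed
    moreover have "act h e \<in> M"
      using act_closed h T(1) e(1) tile_subset by blast
    ultimately have "patch A z (act h e) = z (act h e)"
      using patch_outside_tiles by blast
    then show ?thesis
      using e by metis
  qed
  moreover have "\<Delta> (patch A z) = \<Delta> z"
    using global_trans_patch[OF A z] unfolding A_def by blast
  ultimately show ?thesis
    using patch_PiE[OF A z] by blast
qed

lemma restrict_image_subset_avoiding_copies:
  assumes F: "F \<subseteq> M"
    and T: "T \<subseteq> carrier G" "disjoint_family_on (\<lambda>h. act h ` tile) T" "\<And>h. h \<in> T \<Longrightarrow> act h ` tile \<subseteq> F"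
  shows "(\<lambda>y. restrict y F) ` \<Delta> ` (M \<rightarrow>\<^sub>E Q) \<subseteq> (\<lambda>w. restrict (\<Delta> w) F) `
    {w \<in> neighbourhood_hull F \<rightarrow>\<^sub>E Q.
      \<forall>h\<in>T. restrict w (act h ` tile) \<noteq> restrict (\<lambda>x. c (act (inv h) x)) (act h ` tile)}"
    (is "_ \<subseteq> _ ` ?W")
proof
  fix y assume "y \<in> (\<lambda>y. restrict y F) ` \<Delta> ` (M \<rightarrow>\<^sub>E Q)"
  then obtain z where z: "z \<in> M \<rightarrow>\<^sub>E Q" and y: "y = restrict (\<Delta> z) F"
    by blast
  obtain z' where z': "z' \<in> M \<rightarrow>\<^sub>E Q" "\<Delta> z' = \<Delta> z" and avoid: "\<forall>h\<in>T. \<exists>e\<in>tile. z' (act h e) \<noteq> c e"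
    using exists_same_image_avoiding_copies[OF T(1,2) z] by blast
  define w where "w = restrict z' (neighbourhood_hull F)"
  have "restrict w (act h ` tile) \<noteq> restrict (\<lambda>x. c (act (inv h) x)) (act h ` tile)" if h: "h \<in> T" for h
  proof
    assume eq: "restrict w (act h ` tile) = restrict (\<lambda>x. c (act (inv h) x)) (act h ` tile)"
    obtain e where e: "e \<in> tile" "z' (act h e) \<noteq> c e"
      using avoid h by blast
    have "act h e \<in> neighbourhood_hull F"
      using T(3)[OF h] e(1) subset_neighbourhood_hull by blast
    then have "z' (act h e) = c (act (inv h) (act h e))"
      using fun_cong[OF eq, of "act h e"] e(1) unfolding w_def by simp
    moreover have "act (inv h) (act h e) = e"
      using act_inv_act h T(1) e(1) tile_subset by blast
    ultimately show False
      using e(2) by simp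
  qed
  moreover have "w \<in> neighbourhood_hull F \<rightarrow>\<^sub>E Q"
    unfolding w_def using z'(1) neighbourhood_hull_subset[OF F] by (auto simp: PiE_iff)
  ultimately have "w \<in> ?W"
    by blast
  moreover have "restrict (\<Delta> w) F = y"
    unfolding y z'(2)[symmetric] w_def by (rule restrict_global_trans_cong[OF F]) simp
  ultimately show "y \<in> (\<lambda>w. restrict (\<Delta> w) F) ` ?W"
    by blast
qed

lemma card_restrict_image_le:
  assumes F: "finite F" "F \<subseteq> M"
    and T: "T \<subseteq> carrier G" "finite T" "disjoint_family_on (\<lambda>h. act h ` tile) T"
      "\<And>h. h \<in> T \<Longrightarrow> act h ` tile \<subseteq> F"
  shows "card ((\<lambda>y. restrict y F) ` \<Delta> ` (M \<rightarrow>\<^sub>E Q)) * card Q ^ (card T * card tile)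
      \<le> (card Q ^ card tile - 1) ^ card T * card Q ^ card (neighbourhood_hull F)"
proof -
  define U where "U = neighbourhood_hull F"
  define W where "W = {w \<in> U \<rightarrow>\<^sub>E Q.
    \<forall>h\<in>T. restrict w (act h ` tile) \<noteq> restrict (\<lambda>x. c (act (inv h) x)) (act h ` tile)}"
  have U: "finite U"
    unfolding U_def using finite_neighbourhood_hull F(1) .
  have "finite W"
    unfolding W_def using finite_PiE[OF U, of "\<lambda>_. Q"] finite_states by simp
  then have "card ((\<lambda>y. restrict y F) ` \<Delta> ` (M \<rightarrow>\<^sub>E Q)) \<le> card ((\<lambda>w. restrict (\<Delta> w) F) ` W)"
    using restrict_image_subset_avoiding_copies[OF F(2) T(1,3,4)] unfolding U_def[symmetric] W_def[symmetric]
    by (intro card_mono finite_imageI)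
  also have "\<dots> \<le> card W"
    using \<open>finite W\<close> by (rule card_image_le)
  finally have "card ((\<lambda>y. restrict y F) ` \<Delta> ` (M \<rightarrow>\<^sub>E Q)) \<le> card W" .
  moreover have "card W * card Q ^ (card T * card tile) \<le> (card Q ^ card tile - 1) ^ card T * card Q ^ card U"
    unfolding W_def
  proof (rule card_PiE_avoiding_patterns_le[OF T(2) U finite_states])
    fix h assume h: "h \<in> T"
    then have "h \<in> carrier G"
      using T(1) by blast
    show "act h ` tile \<subseteq> U"
      using T(4)[OF h] subset_neighbourhood_hull unfolding U_def by blast
    show "card (act h ` tile) = card tile"
      using inj_on_subset[OF inj_prop[OF \<open>h \<in> carrier G\<close>] tile_subset] by (rule card_image)
    show "restrict (\<lambda>x. c (act (inv h) x)) (act h ` tile) \<in> act h ` tile \<rightarrow>\<^sub>E Q"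
      using \<open>h \<in> carrier G\<close> c_PiE act_closed tile_subset by (auto simp: PiE_iff)
  qed (use T(3) in simp)
  ultimately show ?thesis
    unfolding U_def by (meson le_trans mult_le_cancel2)
qed

lemma finite_tiles_inside: "finite F \<Longrightarrow> finite {h \<in> carrier G. act h ` tile \<subseteq> F}"
proof -
  assume F: "finite F"
  obtain e where e: "e \<in> tile"
    using tile_nonempty by blast
  have "{h \<in> carrier G. act h ` tile \<subseteq> F} \<subseteq> (\<Union>f\<in>F. {h \<in> carrier G. act h e = f})"
    using e by blast
  moreover have "finite (\<Union>f\<in>F. {h \<in> carrier G. act h e = f})"
    using F finite_card_fibre[OF finite_stabilizer] e tile_subset by blast
  ultimately show ?thesis
    by (rule finite_subset)
qed

lemma exists_maximal_tiling:
  assumes "finite F"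
  obtains T where "T \<subseteq> carrier G" "finite T" "disjoint_family_on (\<lambda>h. act h ` tile) T"
    "\<And>h. h \<in> T \<Longrightarrow> act h ` tile \<subseteq> F"
    "\<And>g. g \<in> carrier G \<Longrightarrow> act g ` tile \<subseteq> F \<Longrightarrow> \<exists>h\<in>T. act g ` tile \<inter> act h ` tile \<noteq> {}"
proof -
  define H where "H = {h \<in> carrier G. act h ` tile \<subseteq> F}"
  define tilings where "tilings = {T. T \<subseteq> H \<and> disjoint_family_on (\<lambda>h. act h ` tile) T}"
  have "finite tilings"
    using finite_tiles_inside[OF assms] unfolding tilings_def H_def by simp
  moreover have "{} \<in> tilings"
    unfolding tilings_def by (simp add: disjoint_family_on_def)
  ultimately obtain T where T: "T \<in> tilings" and maximal: "\<forall>T'\<in>tilings. T \<subseteq> T' \<longrightarrow> T = T'"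
    using finite_has_maximal[of tilings] by blast
  have "\<exists>h\<in>T. act g ` tile \<inter> act h ` tile \<noteq> {}" if g: "g \<in> carrier G" "act g ` tile \<subseteq> F" for g
  proof (cases "g \<in> T")
    case False
    show ?thesis
    proof (rule ccontr)
      assume "\<not> ?thesis"
      then have "insert g T \<in> tilings"
        using T g False unfolding tilings_def H_def by (auto simp: disjoint_family_on_insert)
      then show False
        using maximal False by blast
    qed
  qed (use tile_nonempty in blast)
  moreover have "T \<subseteq> H" "disjoint_family_on (\<lambda>h. act h ` tile) T"
    using T unfolding tilings_def by auto
  moreover have "finite T"
    using \<open>T \<subseteq> H\<close> finite_tiles_inside[OF assms] finite_subset unfolding H_def by blast
  ultimately show ?thesis
    using that[of T] unfolding H_def by blast
qed

lemma card_cells_meeting_tile_le: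
  "finite {m \<in> M. act (gf m) ` tile \<inter> act h ` tile \<noteq> {}}
   \<and> card {m \<in> M. act (gf m) ` tile \<inter> act h ` tile \<noteq> {}} \<le> card tile * card tile * card G0"
proof -
  define S where "S e e' = (\<lambda>g. act g m0) ` {g \<in> carrier G. act g e = act h e'}" for e e'
  have S: "finite (S e e') \<and> card (S e e') \<le> card G0" if "e \<in> tile" for e e'
    using finite_card_fibre[OF finite_stabilizer, of e] that tile_subset card_image_le le_trans
    unfolding S_def by blast
  have sub: "{m \<in> M. act (gf m) ` tile \<inter> act h ` tile \<noteq> {}} \<subseteq> (\<Union>e\<in>tile. \<Union>e'\<in>tile. S e e')"
  proof
    fix m assume "m \<in> {m \<in> M. act (gf m) ` tile \<inter> act h ` tile \<noteq> {}}"
    then obtain e e' where m: "m \<in> M" and e: "e \<in> tile" "e' \<in> tile" "act (gf m) e = act h e'"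
      by blast
    then have "act (gf m) m0 \<in> S e e'"
      unfolding S_def using coord_carrier by simp
    then show "m \<in> (\<Union>e\<in>tile. \<Union>e'\<in>tile. S e e')"
      using coord_act[OF m] e by auto
  qed
  have fin: "finite (\<Union>e\<in>tile. \<Union>e'\<in>tile. S e e')"
    using S finite_tile by (intro finite_UN_I) auto
  moreover have "card (\<Union>e\<in>tile. \<Union>e'\<in>tile. S e e') \<le> card tile * card tile * card G0"
  proof -
    have "card (\<Union>e\<in>tile. \<Union>e'\<in>tile. S e e') \<le> (\<Sum>e\<in>tile. \<Sum>e'\<in>tile. card (S e e'))"
      using finite_tile by (intro order_trans[OF card_UN_le] sum_mono card_UN_le)
    also have "\<dots> \<le> (\<Sum>e\<in>tile. \<Sum>e'\<in>tile. card G0)"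
      using S by (intro sum_mono) auto
    finally show ?thesis
      by simp
  qed
  ultimately show ?thesis
    using card_mono[OF fin sub] finite_subset[OF sub fin] by linarith
qed

lemma cells_leaving_subset_right_boundary:
  assumes "F \<subseteq> M"
  shows "{m \<in> F. \<not> act (gf m) ` tile \<subseteq> F} \<subseteq> (\<Union>e\<in>tile. right_boundary F (gf e <#\<^bsub>G\<^esub> G0))"
proof
  fix m assume "m \<in> {m \<in> F. \<not> act (gf m) ` tile \<subseteq> F}"
  then obtain e where m: "m \<in> F" and e: "e \<in> tile" "act (gf m) e \<notin> F"
    by blast
  have "e \<in> M" "m \<in> M"
    using e(1) tile_subset m assms by auto
  then have "rsemi G act m0 gf m (gf e <#\<^bsub>G\<^esub> G0) = act (gf m) e"
    using rsemi_conv_coset_point coord_coset by simp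
  then have "m \<in> right_boundary F (gf e <#\<^bsub>G\<^esub> G0)"
    using m e(2) unfolding right_boundary_def by simp
  then show "m \<in> (\<Union>e\<in>tile. right_boundary F (gf e <#\<^bsub>G\<^esub> G0))"
    using e(1) by blast
qed

text \<open>Every cell of \<open>F\<close> either leaves \<open>F\<close> under the right semi-action of some \<open>gf e <#\<^bsub>G\<^esub> G0\<close>,
  or its translate of the tile lies in \<open>F\<close> and therefore meets a tile of the maximal tiling.\<close>

lemma card_le_maximal_tiling:
  assumes F: "finite F" "F \<subseteq> M" and T: "finite T"
    and maximal: "\<And>g. g \<in> carrier G \<Longrightarrow> act g ` tile \<subseteq> F \<Longrightarrow> \<exists>h\<in>T. act g ` tile \<inter> act h ` tile \<noteq> {}"
  shows "card F \<le> card T * (card tile * card tile * card G0) + (\<Sum>e\<in>tile. card (right_boundary F (gf e <#\<^bsub>G\<^esub> G0)))"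
proof -
  define meeting where "meeting h = {m \<in> M. act (gf m) ` tile \<inter> act h ` tile \<noteq> {}}" for h
  have cover: "F \<subseteq> (\<Union>h\<in>T. meeting h) \<union> (\<Union>e\<in>tile. right_boundary F (gf e <#\<^bsub>G\<^esub> G0))"
  proof
    fix m assume m: "m \<in> F"
    then have "m \<in> M"
      using F(2) by blast
    show "m \<in> (\<Union>h\<in>T. meeting h) \<union> (\<Union>e\<in>tile. right_boundary F (gf e <#\<^bsub>G\<^esub> G0))"
    proof (cases "act (gf m) ` tile \<subseteq> F")
      case True
      then obtain h where "h \<in> T" "act (gf m) ` tile \<inter> act h ` tile \<noteq> {}"
        using maximal coord_carrier[OF \<open>m \<in> M\<close>] by blast
      then show ?thesis
        using \<open>m \<in> M\<close> unfolding meeting_def by blast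
    next
      case False
      then show ?thesis
        using m cells_leaving_subset_right_boundary[OF F(2)] by blast
    qed
  qed
  have fin: "finite ((\<Union>h\<in>T. meeting h) \<union> (\<Union>e\<in>tile. right_boundary F (gf e <#\<^bsub>G\<^esub> G0)))"
  proof (intro finite_UnI finite_UN_I)
    show "finite (meeting h)" for h
      using card_cells_meeting_tile_le unfolding meeting_def by blast
    show "finite (right_boundary F (gf e <#\<^bsub>G\<^esub> G0))" for e
      using F(1) unfolding right_boundary_def by blast
  qed (use T finite_tile in auto)
  have "card F \<le> card (\<Union>h\<in>T. meeting h) + card (\<Union>e\<in>tile. right_boundary F (gf e <#\<^bsub>G\<^esub> G0))"
    using card_mono[OF fin cover] card_Un_le by (rule le_trans)
  also have "\<dots> \<le> (\<Sum>h\<in>T. card (meeting h)) + (\<Sum>e\<in>tile. card (right_boundary F (gf e <#\<^bsub>G\<^esub> G0)))"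
    using T finite_tile by (intro add_mono card_UN_le)
  also have "\<dots> \<le> card T * (card tile * card tile * card G0) + (\<Sum>e\<in>tile. card (right_boundary F (gf e <#\<^bsub>G\<^esub> G0)))"
    using sum_mono[of T "\<lambda>h. card (meeting h)" "\<lambda>_. card tile * card tile * card G0"]
      card_cells_meeting_tile_le unfolding meeting_def by simp
  finally show ?thesis .
qed

lemma card_tile_ge_1: "card tile \<ge> 1"
  using finite_tile tile_nonempty by (simp add: Suc_le_eq card_gt_0_iff)

lemma tile_meeting_bound_ge_1: "card tile * card tile * card G0 \<ge> 1"
  using card_tile_ge_1 card_stabilizer_ge_1 by (metis mult_le_mono nat_mult_1)

definition entropy_gap :: real where
  "entropy_gap = (ln (real (card Q) ^ card tile) - ln (real (card Q) ^ card tile - 1))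
     / (4 * real (card tile * card tile * card G0))"

lemma entropy_gap_pos: "card Q \<ge> 2 \<Longrightarrow> entropy_gap > 0"
proof -
  assume "card Q \<ge> 2"
  then have "real (card Q) ^ card tile \<ge> 2"
    using card_tile_ge_1
    by (metis of_nat_le_iff of_nat_numeral order_trans power_increasing power_one_right one_le_numeral)
  then have "ln (real (card Q) ^ card tile - 1) < ln (real (card Q) ^ card tile)"
    using \<open>card Q \<ge> 2\<close> by (subst ln_less_cancel_iff) auto
  moreover have "real (card tile * card tile * card G0) > 0"
    using tile_meeting_bound_ge_1 by linarith
  ultimately show ?thesis
    unfolding entropy_gap_def by simp
qed

lemma ln_card_restrict_image_le:
  assumes Q: "card Q \<ge> 2" and F: "finite F" "F \<subseteq> M" "F \<noteq> {}"
    and hull: "(\<Sum>n\<in>N. real (card (right_boundary F n))) \<le> entropy_gap / ln (card Q) * card F"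
    and tiles: "(\<Sum>e\<in>tile. real (card (right_boundary F (gf e <#\<^bsub>G\<^esub> G0)))) \<le> 1 / 2 * card F"
  shows "ln (card ((\<lambda>y. restrict y F) ` \<Delta> ` (M \<rightarrow>\<^sub>E Q))) \<le> card F * (ln (card Q) - entropy_gap)"
proof -
  define q where "q = real (card Q)"
  define K where "K = real (card tile * card tile * card G0)"
  define Y where "Y = (\<lambda>y. restrict y F) ` \<Delta> ` (M \<rightarrow>\<^sub>E Q)"
  have gap: "entropy_gap = (ln (q ^ card tile) - ln (q ^ card tile - 1)) / (4 * K)"
    unfolding entropy_gap_def q_def K_def ..
  have K: "K \<ge> 1"
    unfolding K_def using tile_meeting_bound_ge_1 by linarith
  obtain T where T: "T \<subseteq> carrier G" "finite T" "disjoint_family_on (\<lambda>h. act h ` tile) T"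
      "\<And>h. h \<in> T \<Longrightarrow> act h ` tile \<subseteq> F"
    and maximal: "\<And>g. g \<in> carrier G \<Longrightarrow> act g ` tile \<subseteq> F \<Longrightarrow> \<exists>h\<in>T. act g ` tile \<inter> act h ` tile \<noteq> {}"
    using exists_maximal_tiling[OF F(1)] by metis
  have "real (card F) \<le> real (card T) * K + 1 / 2 * card F"
    using of_nat_mono[OF card_le_maximal_tiling[OF F(1,2) T(2) maximal], where 'a=real] tiles
    unfolding K_def by simp
  then have tiles': "real (card F) \<le> 2 * K * real (card T)"
    by (simp add: algebra_simps)
  have "real (card (neighbourhood_hull F)) \<le> card F + entropy_gap / ln q * card F"
    using of_nat_mono[OF card_neighbourhood_hull_le[OF F(1,2)], where 'a=real] hull
    unfolding q_def by simp
  then have hull': "real (card (neighbourhood_hull F))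
      \<le> card F + (ln (q ^ card tile) - ln (q ^ card tile - 1)) / (4 * K * ln q) * card F"
    unfolding gap by (simp add: mult.assoc)
  have "card Q ^ card tile \<ge> 1"
    using Q by simp
  then have bound: "real (card Y) * q ^ (card T * card tile)
      \<le> (q ^ card tile - 1) ^ card T * q ^ card (neighbourhood_hull F)"
    using of_nat_mono[OF card_restrict_image_le[OF F(1,2) T], where 'a=real]
    unfolding Y_def q_def by simp
  have Y: "real (card Y) \<ge> 1"
    unfolding Y_def using card_restrict_image_ge_1[OF F(1,2)] by simp
  have "q \<ge> 2"
    unfolding q_def using Q by simp
  from ln_le_of_tiling_estimate[OF this card_tile_ge_1 K Y bound hull' tiles']
  show ?thesis
    unfolding Y_def q_def gap .
qed

lemma entropy_image_less:
  assumes folner: "right_folner_net G M act m0 gf I rel F" and Q: "card Q \<ge> 2"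
  shows "entropy I rel F (\<Delta> ` (M \<rightarrow>\<^sub>E Q)) < ereal (ln (card Q))"
proof -
  have "entropy_gap / ln (card Q) > 0"
    using entropy_gap_pos[OF Q] Q by simp
  then have hull: "eventually (\<lambda>i. (\<Sum>n\<in>N. real (card (right_boundary (F i) n)))
      \<le> entropy_gap / ln (card Q) * card (F i)) (net_filter I rel)"
    using eventually_sum_right_boundary_le[OF folner finite_neighbourhood, of "\<lambda>n. n"]
      neighbourhood_cosets by blast
  have "\<And>e. e \<in> tile \<Longrightarrow> gf e <#\<^bsub>G\<^esub> G0 \<in> lcosets0 G act m0"
    using coord_coset(1) tile_subset by blast
  from eventually_sum_right_boundary_le[OF folner finite_tile this, where r = "1 / 2"]
  have tiles: "eventually (\<lambda>i. (\<Sum>e\<in>tile. real (card (right_boundary (F i) (gf e <#\<^bsub>G\<^esub> G0))))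
      \<le> 1 / 2 * card (F i)) (net_filter I rel)"
    by simp
  have "eventually (\<lambda>i. ereal (ln (card ((\<lambda>c. restrict c (F i)) ` \<Delta> ` (M \<rightarrow>\<^sub>E Q))) / card (F i))
      \<le> ereal (ln (card Q) - entropy_gap)) (net_filter I rel)"
    using eventually_in_index_set[OF folner] hull tiles
  proof eventually_elim
    case (elim i)
    then have "finite (F i)" "F i \<subseteq> M" "F i \<noteq> {}"
      using right_folner_netD(2)[OF folner] by auto
    then show ?case
      using ln_card_restrict_image_le[OF Q] elim(2,3)
      by (simp add: divide_le_eq card_gt_0_iff mult.commute)
  qed
  then have "entropy I rel F (\<Delta> ` (M \<rightarrow>\<^sub>E Q)) \<le> ereal (ln (card Q) - entropy_gap)"
    unfolding entropy_def by (rule Limsup_bounded)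
  also have "\<dots> < ereal (ln (card Q))"
    using entropy_gap_pos[OF Q] by simp
  finally show ?thesis .
qed

end

theorem theorem6:
  fixes G :: "('g, 'b) monoid_scheme" and M :: "'m set" and act :: "'g \<Rightarrow> 'm \<Rightarrow> 'm"
    and m0 :: 'm and gf :: "'m \<Rightarrow> 'g"
    and Q :: "'q set" and N :: "'g set set" and \<delta> :: "('g set \<Rightarrow> 'q) \<Rightarrow> 'q"
    and I :: "'i set" and rel :: "'i \<Rightarrow> 'i \<Rightarrow> bool" and F :: "'i \<Rightarrow> 'm set"
  assumes cs: "cell_space G M act m0 gf"
    and amen: "right_amenable G M act m0 gf"
    and G0_fin: "finite (stab0 G act m0)"
    and Q_fin: "finite Q" and Q_two: "card Q \<ge> 2"
    and N_sub: "N \<subseteq> lcosets0 G act m0" and N_fin: "finite N"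
    and N_inv: "\<forall>g0\<in>stab0 G act m0. \<forall>n\<in>N. g0 <#\<^bsub>G\<^esub> n \<in> N"
    and \<delta>_Q: "\<forall>l\<in>N \<rightarrow>\<^sub>E Q. \<delta> l \<in> Q"
    and folner: "right_folner_net G M act m0 gf I rel F"
    and inv: "bullet_invariant G act m0 Q N \<delta>"
    and not_preinj: "\<not> pre_injective M Q (global_trans G M act m0 gf N \<delta>)"
  shows "entropy I rel F ((global_trans G M act m0 gf N \<delta>) ` (M \<rightarrow>\<^sub>E Q))
           < ereal (ln (real (card Q)))"
proof -
  obtain c c' where c: "c \<in> M \<rightarrow>\<^sub>E Q" and c': "c' \<in> M \<rightarrow>\<^sub>E Q" and "c \<noteq> c'"
    and fin: "finite {m \<in> M. c m \<noteq> c' m}"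
    and eq: "global_trans G M act m0 gf N \<delta> c = global_trans G M act m0 gf N \<delta> c'"
    using not_preinj unfolding pre_injective_def by blast
  then have "{m \<in> M. c m \<noteq> c' m} \<noteq> {}"
    by (metis (mono_tags, lifting) Collect_empty_eq PiE_ext)
  moreover have "Q \<noteq> {}"
    using Q_two by auto
  ultimately interpret mutually_erasable G M act m0 gf Q N \<delta> c c'
    using cell_space_imp_cellular_space[OF cs] G0_fin Q_fin N_sub N_fin N_inv \<delta>_Q inv c c' fin eq
    unfolding mutually_erasable_def mutually_erasable_axioms_def semi_cellular_automaton_def
      semi_cellular_automaton_axioms_def stab0_def
    by blast
  show ?thesis
    using entropy_image_less[OF folner Q_two] .
qed

end
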